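(* In the setting of a metric space $\Omega$ with finite Borel measure $\eta$ and finite families $Y_n(\omega)=\{f_{l,n}(\omega)\}_{l=1}^{R_n}\subset\mathbb R^d$ of continuous functions of $\omega$, assume there is $G:(0,\infty)\to(0,\infty)$ with $\lim_{s\to0}G(s)=0$ and $\eta(\Omega)-\int_\Omega T(Y_n(\omega),sR_n^{-1/d})/R_n\,d\eta\le G(s)$ for all $n$ and $s>0$. For $c,s>0$ and $n\in\mathbb N$ let $B(c,s,n)=\{\omega: T(Y_n(\omega),sR_n^{-1/d})/R_n>c\}$. Then $$\eta\Big(\bigcap_{\epsilon>0}\bigcup_{c,s>0}\{\omega:\overline d(\{n:\omega\in B(c,s,n)\})\ge1-\epsilon\}\Big)=\eta(\Omega).$$
   Context: $T(Y,r)$ is the maximal cardinality of an $r$-separated subset of the finite set $Y$ (distinct points at distance $>r$). $\overline d(B)=\limsup_n\#(B\cap[1,n])/n$ for $B\subseteq\mathbb N$. *)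

theory Defs
  imports "HOL-Analysis.Analysis" "HOL-Library.Liminf_Limsup"
begin

definition separated :: "real \<Rightarrow> 'b::metric_space set \<Rightarrow> bool" where
  "separated r S \<longleftrightarrow> (\<forall>x\<in>S. \<forall>y\<in>S. x \<noteq> y \<longrightarrow> dist x y > r)"

definition Tsep :: "'b::metric_space set \<Rightarrow> real \<Rightarrow> nat" where
  "Tsep Y r = Max {card S | S. S \<subseteq> Y \<and> separated r S}"

definition upper_density :: "nat set \<Rightarrow> ereal" where
  "upper_density B = limsup (\<lambda>n. ereal (real (card (B \<inter> {1..n})) / real n))"

end

theory Submission
  imports Defs
begin

text \<open>
  Write \<open>X\<^sub>n\<^sup>s(\<omega>) = T(Y\<^sub>n(\<omega>), s R\<^sub>n\<^sup>-\<^sup>1\<^sup>/\<^sup>d) / R\<^sub>n\<close>; it takes values in \<open>[0,1]\<close>.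
  The hypothesis bounds the expected defect \<open>1 - X\<^sub>n\<^sup>s\<close> by \<open>G(s)\<close>, so by a reverse Markov
  inequality the event \<open>X\<^sub>n\<^sup>s \<le> c\<close> has measure at most \<open>G(s) / (1 - c)\<close>, uniformly in \<open>n\<close>.
  Averaging these events over \<open>n \<le> N\<close> and applying Fatou's lemma, the set where the upper
  density of \<open>{n. X\<^sub>n\<^sup>s > c}\<close> stays below \<open>1 - \<epsilon>\<close> has measure at most
  \<open>G(s) / ((1 - c) \<epsilon>)\<close>. Since the sets \<open>B(c,s,n)\<close> grow as \<open>c\<close> and \<open>s\<close> decrease, letting
  \<open>c = s \<rightarrow> 0\<close> leaves an exceptional set of measure zero for each \<open>\<epsilon>\<close>.
\<close>

lemma upper_density_mono:
  assumes "A \<subseteq> B"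
  shows "upper_density A \<le> upper_density B"
  unfolding upper_density_def
proof (intro Limsup_mono always_eventually allI)
  fix N :: nat
  have "card (A \<inter> {1..N}) \<le> card (B \<inter> {1..N})"
    using assms by (intro card_mono) auto
  then show "ereal (real (card (A \<inter> {1..N})) / real N) \<le> ereal (real (card (B \<inter> {1..N})) / real N)"
    by (simp add: divide_right_mono)
qed

lemma card_Int_atLeastAtMost_eq_sum_indicator:
  "real (card ({n. \<omega> \<in> B n} \<inter> {1..N::nat})) = (\<Sum>n\<in>{1..N}. indicator (B n) \<omega>)"
proof -
  have "(\<Sum>n\<in>{1..N}. indicator (B n) \<omega>) = real (\<Sum>n\<in>{1..N}. indicator {n. \<omega> \<in> B n} n :: nat)"
    by (simp add: indicator_def)
  also have "\<dots> = real (card ({1..N} \<inter> {n. \<omega> \<in> B n}))"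
    by (subst sum_indicator_eq_card) auto
  finally show ?thesis
    by (simp add: Int_commute)
qed

lemma borel_measurable_upper_density:
  assumes "\<And>n. B n \<in> sets M"
  shows "(\<lambda>\<omega>. upper_density {n. \<omega> \<in> B n}) \<in> borel_measurable M"
  unfolding upper_density_def card_Int_atLeastAtMost_eq_sum_indicator using assms by measurable

lemma upper_density_less_imp_eventually_card_Diff:
  assumes "upper_density A < ereal (1 - \<epsilon>)"
  shows "eventually (\<lambda>N. \<epsilon> * real N \<le> real (card ({1..N} - A))) sequentially"
proof -
  have "eventually (\<lambda>N. ereal (real (card (A \<inter> {1..N})) / real N) < ereal (1 - \<epsilon>)) sequentially"
    using assms unfolding upper_density_def by (rule Limsup_lessD)
  then show ?thesis
    using eventually_ge_at_top[of 1]
  proof eventually_elim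
    case (elim N)
    have "real (card (A \<inter> {1..N})) < (1 - \<epsilon>) * real N"
      using elim by (simp add: divide_less_eq)
    moreover have "card {1..N} = card ({1..N} \<inter> A) + card ({1..N} - A)"
      by (rule card_Int_Diff) simp
    ultimately show ?case
      by (simp add: Int_commute algebra_simps)
  qed
qed

lemma nn_integral_average_indicator_le:
  fixes A :: "nat \<Rightarrow> 'a set"
  assumes "finite_measure M" and sets: "\<And>n. A n \<in> sets M"
    and small: "\<And>n. n \<ge> 1 \<Longrightarrow> measure M (A n) \<le> \<delta>"
  shows "(\<integral>\<^sup>+\<omega>. ennreal ((\<Sum>n\<in>{1..N}. indicator (A n) \<omega>) / real N) \<partial>M) \<le> ennreal \<delta>"
proof (cases "N = 0")
  case False
  interpret finite_measure M by fact
  have integrable: "integrable M (indicator (A n) :: 'a \<Rightarrow> real)" for n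
    using sets by (intro integrable_real_indicator) (auto simp: less_top[symmetric])
  have "(\<integral>\<^sup>+\<omega>. ennreal ((\<Sum>n\<in>{1..N}. indicator (A n) \<omega>) / real N) \<partial>M)
      = ennreal ((\<Sum>n\<in>{1..N}. measure M (A n)) / real N)"
    using sets integrable
    by (subst nn_integral_eq_integral)
      (auto intro!: AE_I2 sum_nonneg divide_nonneg_nonneg simp: Bochner_Integration.integral_sum)
  also have "\<dots> \<le> ennreal \<delta>"
    using small False sum_bounded_above[of "{1..N}" "\<lambda>n. measure M (A n)" \<delta>]
    by (intro ennreal_leI) (simp add: divide_le_eq mult.commute)
  finally show ?thesis .
qed simp

lemma measure_upper_density_less_le:
  fixes B :: "nat \<Rightarrow> 'a set"
  assumes "finite_measure M" and sets: "\<And>n. B n \<in> sets M"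
    and small: "\<And>n. n \<ge> 1 \<Longrightarrow> measure M (space M - B n) \<le> \<delta>" and "\<epsilon> > 0"
  shows "measure M {\<omega>\<in>space M. upper_density {n. \<omega> \<in> B n} < ereal (1 - \<epsilon>)} \<le> \<delta> / \<epsilon>"
proof -
  interpret finite_measure M by fact
  define E where "E = {\<omega>\<in>space M. upper_density {n. \<omega> \<in> B n} < ereal (1 - \<epsilon>)}"
  define u where "u N \<omega> = ennreal ((\<Sum>n\<in>{1..N}. indicator (space M - B n) \<omega>) / real N)" for N \<omega>
  have E: "E \<in> sets M"
    unfolding E_def using borel_measurable_upper_density[OF sets] by measurable
  have u: "u N \<in> borel_measurable M" for N
    unfolding u_def using sets by measurable
  have liminf_u: "ennreal \<epsilon> * indicator E \<omega> \<le> liminf (\<lambda>N. u N \<omega>)" for \<omega>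
  proof (cases "\<omega> \<in> E")
    case True
    then have "\<omega> \<in> space M" unfolding E_def by simp
    then have Diff_eq: "{1..N} - {n. \<omega> \<in> B n} = {n. \<omega> \<in> space M - B n} \<inter> {1..N}" for N
      by auto
    have card_eq: "real (card ({1..N} - {n. \<omega> \<in> B n})) = (\<Sum>n\<in>{1..N}. indicator (space M - B n) \<omega>)" for N
      by (simp only: Diff_eq card_Int_atLeastAtMost_eq_sum_indicator)
    have "eventually (\<lambda>N. \<epsilon> * real N \<le> real (card ({1..N} - {n. \<omega> \<in> B n}))) sequentially"
      using True unfolding E_def by (intro upper_density_less_imp_eventually_card_Diff) simp
    then have "eventually (\<lambda>N. ennreal \<epsilon> \<le> u N \<omega>) sequentially"
      using eventually_ge_at_top[of 1]
      unfolding u_def card_eq[symmetric]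
      by eventually_elim (simp add: ennreal_leI le_divide_eq)
    then show ?thesis
      using True by (simp add: Liminf_bounded)
  qed simp
  have integral_u: "integral\<^sup>N M (u N) \<le> ennreal \<delta>" for N
    unfolding u_def using sets small by (intro nn_integral_average_indicator_le assms(1)) auto
  have "ennreal \<epsilon> * emeasure M E = (\<integral>\<^sup>+\<omega>. ennreal \<epsilon> * indicator E \<omega> \<partial>M)"
    using E by (simp add: nn_integral_cmult_indicator)
  also have "\<dots> \<le> (\<integral>\<^sup>+\<omega>. liminf (\<lambda>N. u N \<omega>) \<partial>M)"
    by (intro nn_integral_mono liminf_u)
  also have "\<dots> \<le> liminf (\<lambda>N. integral\<^sup>N M (u N))"
    by (rule nn_integral_liminf[OF u])
  also have "\<dots> \<le> ennreal \<delta>"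
    using Liminf_mono[of "\<lambda>N. integral\<^sup>N M (u N)" "\<lambda>_. ennreal \<delta>" sequentially] integral_u
    by (simp add: Liminf_const)
  finally have "ennreal \<epsilon> * emeasure M E \<le> ennreal \<delta>" .
  moreover have "\<delta> \<ge> 0"
    using small[of 1] measure_nonneg[of M "space M - B 1"] by linarith
  ultimately have "\<epsilon> * measure M E \<le> \<delta>"
    using \<open>\<epsilon> > 0\<close> by (simp add: emeasure_eq_measure flip: ennreal_mult)
  then show ?thesis
    using \<open>\<epsilon> > 0\<close> unfolding E_def by (simp add: le_divide_eq mult.commute)
qed

lemma AE_ex_upper_density_ge:
  fixes A :: "nat \<Rightarrow> nat \<Rightarrow> 'a set"
  assumes "finite_measure M" and sets: "\<And>j n. A j n \<in> sets M"
    and small: "\<And>j n. n \<ge> 1 \<Longrightarrow> measure M (space M - A j n) \<le> \<delta> j"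
    and \<delta>: "\<delta> \<longlonglongrightarrow> 0" and "\<epsilon> > 0"
  shows "AE \<omega> in M. \<exists>j. ereal (1 - \<epsilon>) \<le> upper_density {n. \<omega> \<in> A j n}"
proof -
  interpret finite_measure M by fact
  define N where "N = (\<Inter>j. {\<omega>\<in>space M. upper_density {n. \<omega> \<in> A j n} < ereal (1 - \<epsilon>)})"
  have N: "N \<in> sets M"
    unfolding N_def using borel_measurable_upper_density[OF sets] by measurable
  have "measure M N \<le> \<delta> j / \<epsilon>" for j
  proof -
    have "measure M N \<le> measure M {\<omega>\<in>space M. upper_density {n. \<omega> \<in> A j n} < ereal (1 - \<epsilon>)}"
      using borel_measurable_upper_density[OF sets]
      by (intro finite_measure_mono) (auto simp: N_def)
    also have "\<dots> \<le> \<delta> j / \<epsilon>"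
      using assms(1,5) by (intro measure_upper_density_less_le sets small)
    finally show ?thesis .
  qed
  moreover have "(\<lambda>j. \<delta> j / \<epsilon>) \<longlonglongrightarrow> 0"
    using tendsto_divide[OF \<delta> tendsto_const, of \<epsilon>] \<open>\<epsilon> > 0\<close> by simp
  ultimately have "measure M N \<le> 0"
    by (intro tendsto_lowerbound[of "\<lambda>j. \<delta> j / \<epsilon>"]) (auto intro: always_eventually)
  then have "N \<in> null_sets M"
    using N by (auto simp: null_sets_def emeasure_eq_measure intro: antisym measure_nonneg)
  then show ?thesis
    by (rule AE_I') (auto simp: N_def not_le)
qed

lemma Inter_Union_upper_density_ge_eq:
  fixes B :: "real \<Rightarrow> real \<Rightarrow> nat \<Rightarrow> 'a set" and t :: "nat \<Rightarrow> real"
  assumes antimono: "\<And>c s c' s' n. 0 < c' \<Longrightarrow> c' \<le> c \<Longrightarrow> 0 < s' \<Longrightarrow> s' \<le> s \<Longrightarrow> B c s n \<subseteq> B c' s' n"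
    and t_pos: "\<And>j. 0 < t j" and t_lim: "t \<longlonglongrightarrow> 0"
  shows "(\<Inter>\<epsilon>\<in>{0<..}. \<Union>c\<in>{0<..}. \<Union>s\<in>{0<..}. {\<omega>\<in>S. ereal (1 - \<epsilon>) \<le> upper_density {n. \<omega> \<in> B c s n}})
    = {\<omega>\<in>S. \<forall>k::nat. \<exists>j. ereal (1 - 1 / real (Suc k)) \<le> upper_density {n. \<omega> \<in> B (t j) (t j) n}}"
    (is "?lhs = ?rhs")
proof (intro set_eqI iffI)
  fix \<omega> assume \<omega>: "\<omega> \<in> ?lhs"
  have "\<exists>j. ereal (1 - 1 / real (Suc k)) \<le> upper_density {n. \<omega> \<in> B (t j) (t j) n}" for k
  proof -
    have "1 / real (Suc k) \<in> {0<..}"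
      by simp
    with \<omega> obtain c s where cs: "0 < c" "0 < s"
      "ereal (1 - 1 / real (Suc k)) \<le> upper_density {n. \<omega> \<in> B c s n}"
      by blast
    have "eventually (\<lambda>j. t j < min c s) sequentially"
      using cs by (intro order_tendstoD(2)[OF t_lim]) simp
    then obtain j where "t j < min c s"
      by (auto simp: eventually_sequentially)
    then have "B c s n \<subseteq> B (t j) (t j) n" for n
      using antimono[of "t j" c "t j" s n] t_pos[of j] by simp
    then have "upper_density {n. \<omega> \<in> B c s n} \<le> upper_density {n. \<omega> \<in> B (t j) (t j) n}"
      by (intro upper_density_mono) blast
    then show ?thesis
      using cs(3) order_trans by blast
  qed
  then show "\<omega> \<in> ?rhs"
    using \<omega> by (auto dest!: bspec[where x=1])
next
  fix \<omega> assume \<omega>: "\<omega> \<in> ?rhs"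
  have "\<exists>c\<in>{0<..}. \<exists>s\<in>{0<..}. ereal (1 - \<epsilon>) \<le> upper_density {n. \<omega> \<in> B c s n}" if \<epsilon>: "0 < \<epsilon>" for \<epsilon>
  proof -
    obtain k where k: "inverse (real (Suc k)) < \<epsilon>"
      using reals_Archimedean[OF \<epsilon>] by blast
    obtain j where "ereal (1 - 1 / real (Suc k)) \<le> upper_density {n. \<omega> \<in> B (t j) (t j) n}"
      using \<omega> by blast
    moreover have "ereal (1 - \<epsilon>) \<le> ereal (1 - 1 / real (Suc k))"
      using k by (simp add: inverse_eq_divide)
    ultimately show ?thesis
      using t_pos[of j] by (meson greaterThan_iff order_trans)
  qed
  then show "\<omega> \<in> ?lhs"
    using \<omega> by auto
qed

lemma measure_upper_density_ge_eq_space: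
  fixes B :: "real \<Rightarrow> real \<Rightarrow> nat \<Rightarrow> 'a set" and g :: "real \<Rightarrow> real"
  assumes "finite_measure M"
    and sets: "\<And>c s n. 0 < s \<Longrightarrow> B c s n \<in> sets M"
    and antimono: "\<And>c s c' s' n. 0 < c' \<Longrightarrow> c' \<le> c \<Longrightarrow> 0 < s' \<Longrightarrow> s' \<le> s \<Longrightarrow> B c s n \<subseteq> B c' s' n"
    and small: "\<And>t n. 0 < t \<Longrightarrow> t < 1 \<Longrightarrow> n \<ge> 1 \<Longrightarrow> measure M (space M - B t t n) \<le> g t"
    and g: "(g \<longlongrightarrow> 0) (at_right 0)"
  shows "measure M (\<Inter>\<epsilon>\<in>{0<..}. \<Union>c\<in>{0<..}. \<Union>s\<in>{0<..}.
      {\<omega>\<in>space M. ereal (1 - \<epsilon>) \<le> upper_density {n. \<omega> \<in> B c s n}}) = measure M (space M)"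
proof -
  define t where "t j = inverse (real (Suc (Suc j)))" for j
  have t: "0 < t j" "t j < 1" for j
    by (auto simp: t_def inverse_less_1_iff)
  have t_lim: "t \<longlonglongrightarrow> 0"
    unfolding t_def by (rule LIMSEQ_Suc[OF LIMSEQ_inverse_real_of_nat])
  then have "filterlim t (at_right 0) sequentially"
    using t by (intro tendsto_imp_filterlim_at_right) auto
  then have g_t: "(\<lambda>j. g (t j)) \<longlonglongrightarrow> 0"
    by (rule filterlim_compose[OF g])
  define Z where
    "Z = {\<omega>\<in>space M. \<forall>k::nat. \<exists>j. ereal (1 - 1 / real (Suc k)) \<le> upper_density {n. \<omega> \<in> B (t j) (t j) n}}"
  have "AE \<omega> in M. \<forall>k::nat. \<exists>j. ereal (1 - 1 / real (Suc k)) \<le> upper_density {n. \<omega> \<in> B (t j) (t j) n}"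
    unfolding AE_all_countable using t
    by (intro allI AE_ex_upper_density_ge[OF assms(1) _ _ g_t] sets small) auto
  then have "AE \<omega> in M. \<omega> \<in> Z \<longleftrightarrow> \<omega> \<in> space M"
    unfolding Z_def by (auto intro: AE_mp[OF AE_space])
  moreover have "Z \<in> sets M"
    unfolding Z_def using borel_measurable_upper_density[OF sets] t by measurable
  ultimately have "measure M Z = measure M (space M)"
    by (intro measure_eq_AE) auto
  then show ?thesis
    using Inter_Union_upper_density_ge_eq[OF antimono t(1) t_lim, where S="space M"] by (simp add: Z_def)
qed

lemma separated_empty [simp]: "separated r {}"
  by (simp add: separated_def)

lemma separated_mono: "r' \<le> r \<Longrightarrow> separated r S \<Longrightarrow> separated r' S"
  unfolding separated_def by force

lemma finite_card_separated_subsets: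
  "finite Y \<Longrightarrow> finite {card S | S. S \<subseteq> Y \<and> separated r S}"
  by (rule finite_subset[of _ "card ` Pow Y"]) auto

lemma card_le_Tsep:
  assumes "finite Y" "S \<subseteq> Y" "separated r S"
  shows "card S \<le> Tsep Y r"
  unfolding Tsep_def using assms by (intro Max_ge finite_card_separated_subsets) auto

lemma Tsep_attained:
  assumes "finite Y"
  obtains S where "S \<subseteq> Y" "separated r S" "card S = Tsep Y r"
proof -
  have "Tsep Y r \<in> {card S | S. S \<subseteq> Y \<and> separated r S}"
    unfolding Tsep_def using assms by (intro Max_in finite_card_separated_subsets) auto
  then show ?thesis
    using that by auto
qed

lemma Tsep_le_card:
  assumes "finite Y"
  shows "Tsep Y r \<le> card Y"
proof -
  obtain S where S: "S \<subseteq> Y" "card S = Tsep Y r"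
    using Tsep_attained[OF assms] by blast
  show ?thesis
    using card_mono[OF assms S(1)] S(2) by simp
qed

lemma Tsep_antimono:
  assumes "finite Y" "r' \<le> r"
  shows "Tsep Y r \<le> Tsep Y r'"
proof -
  obtain S where S: "S \<subseteq> Y" "separated r S" "card S = Tsep Y r"
    using Tsep_attained[OF assms(1)] by blast
  show ?thesis
    using card_le_Tsep[OF assms(1) S(1) separated_mono[OF assms(2) S(2)]] S(3) by simp
qed

lemma inj_on_separated_image_iff:
  assumes "0 \<le> r"
  shows "inj_on g L \<and> separated r (g ` L) \<longleftrightarrow> (\<forall>i\<in>L. \<forall>j\<in>L. i \<noteq> j \<longrightarrow> r < dist (g i) (g j))"
    (is "_ \<longleftrightarrow> ?pairwise")
proof
  assume "inj_on g L \<and> separated r (g ` L)"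
  then show ?pairwise
    unfolding separated_def by (metis image_eqI inj_on_contraD)
next
  assume ?pairwise
  moreover from this have "inj_on g L"
    using assms by (intro inj_onI) (metis dist_self not_less)
  ultimately show "inj_on g L \<and> separated r (g ` L)"
    unfolding separated_def by auto
qed

lemma Tsep_image_eq_Max:
  fixes g :: "'i \<Rightarrow> 'b::metric_space"
  assumes I: "finite I" and r: "0 \<le> r"
  shows "Tsep (g ` I) r
    = Max ((\<lambda>L. if \<forall>i\<in>L. \<forall>j\<in>L. i \<noteq> j \<longrightarrow> r < dist (g i) (g j) then card L else 0) ` Pow I)"
    (is "_ = Max (?c ` _)")
proof (rule antisym)
  obtain S where S: "S \<subseteq> g ` I" "separated r S" "card S = Tsep (g ` I) r"
    by (rule Tsep_attained[OF finite_imageI[OF I]])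
  obtain L where L: "L \<subseteq> I" "inj_on g L" "S = g ` L"
    using S(1) subset_image_inj[of S g I] by blast
  have pairwise: "\<forall>i\<in>L. \<forall>j\<in>L. i \<noteq> j \<longrightarrow> r < dist (g i) (g j)"
    using L(2,3) S(2) by (intro iffD1[OF inj_on_separated_image_iff[OF r]]) simp
  have "Tsep (g ` I) r = card L"
    using card_image[OF L(2)] L(3) S(3) by simp
  also have "\<dots> = ?c L"
    by (rule if_P[OF pairwise, symmetric])
  also have "\<dots> \<le> Max (?c ` Pow I)"
    using I L(1) by (intro Max_ge) auto
  finally show "Tsep (g ` I) r \<le> Max (?c ` Pow I)" .
next
  have bound: "?c L \<le> Tsep (g ` I) r" if L: "L \<subseteq> I" for L
  proof (cases "\<forall>i\<in>L. \<forall>j\<in>L. i \<noteq> j \<longrightarrow> r < dist (g i) (g j)")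
    case True
    then have "inj_on g L" "separated r (g ` L)"
      using iffD2[OF inj_on_separated_image_iff[OF r]] by auto
    then have "card (g ` L) \<le> Tsep (g ` I) r"
      using I L by (intro card_le_Tsep) auto
    then show ?thesis
      using True card_image[OF \<open>inj_on g L\<close>] by simp
  next
    case False
    then show ?thesis
      by (subst if_not_P) simp_all
  qed
  show "Max (?c ` Pow I) \<le> Tsep (g ` I) r"
  proof (rule Max.boundedI)
    show "finite (?c ` Pow I)"
      using I by simp
    show "?c ` Pow I \<noteq> {}"
      by blast
    show "a \<le> Tsep (g ` I) r" if "a \<in> ?c ` Pow I" for a
      using that bound by blast
  qed
qed

lemma borel_measurable_Tsep:
  fixes g :: "'i \<Rightarrow> 'a \<Rightarrow> 'b::{metric_space, second_countable_topology}"
  assumes I: "finite I" and r: "0 \<le> r" and g: "\<And>i. i \<in> I \<Longrightarrow> g i \<in> borel_measurable M"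
  shows "(\<lambda>\<omega>. Tsep ((\<lambda>i. g i \<omega>) ` I) r) \<in> borel_measurable M"
proof -
  have "Measurable.pred M (\<lambda>\<omega>. i \<noteq> j \<longrightarrow> r < dist (g i \<omega>) (g j \<omega>))" if "i \<in> I" "j \<in> I" for i j
    using g[OF that(1)] g[OF that(2)] by measurable
  then have "Measurable.pred M (\<lambda>\<omega>. \<forall>i\<in>L. \<forall>j\<in>L. i \<noteq> j \<longrightarrow> r < dist (g i \<omega>) (g j \<omega>))" if "L \<subseteq> I" for L
    using that finite_subset[OF that I] by (intro pred_intros_finite) auto
  then show ?thesis
    unfolding Tsep_image_eq_Max[OF I r] using I by (intro borel_measurable_Max measurable_If) auto
qed

lemma reverse_Markov_inequality:
  fixes X :: "'a \<Rightarrow> real"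
  assumes "finite_measure M" and X: "integrable M X" and le_1: "\<And>\<omega>. \<omega> \<in> space M \<Longrightarrow> X \<omega> \<le> 1"
  shows "(1 - c) * measure M {\<omega>\<in>space M. X \<omega> \<le> c} \<le> measure M (space M) - integral\<^sup>L M X"
proof -
  interpret finite_measure M by fact
  define A where "A = {\<omega>\<in>space M. X \<omega> \<le> c}"
  have A: "A \<in> sets M"
    unfolding A_def using borel_measurable_integrable[OF X] by measurable
  have ind: "integrable M (indicator (space M - A) :: 'a \<Rightarrow> real)" "integrable M (indicator A :: 'a \<Rightarrow> real)"
    using A by (auto intro!: integrable_real_indicator simp: less_top[symmetric])
  have "integral\<^sup>L M X \<le> (\<integral>\<omega>. indicator (space M - A) \<omega> + c * indicator A \<omega> \<partial>M)"
  proof (rule integral_mono[OF X])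
    show "integrable M (\<lambda>\<omega>. indicator (space M - A) \<omega> + c * indicator A \<omega> :: real)"
      using ind by (intro Bochner_Integration.integrable_add integrable_mult_right)
  qed (use le_1 in \<open>auto simp: A_def split: split_indicator\<close>)
  also have "\<dots> = measure M (space M - A) + c * measure M A"
    using A ind by (simp add: Bochner_Integration.integral_add)
  also have "\<dots> = measure M (space M) - (1 - c) * measure M A"
    using A by (simp add: finite_measure_compl algebra_simps)
  finally show ?thesis
    unfolding A_def by simp
qed

lemma measure_upper_density_level_sets_eq_space:
  fixes X :: "real \<Rightarrow> nat \<Rightarrow> 'a \<Rightarrow> real" and G :: "real \<Rightarrow> real"
  assumes "finite_measure M"
    and meas: "\<And>s n. 0 < s \<Longrightarrow> n \<ge> 1 \<Longrightarrow> X s n \<in> borel_measurable M"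
    and unit_interval: "\<And>s n \<omega>. 0 \<le> X s n \<omega> \<and> X s n \<omega> \<le> 1"
    and antimono: "\<And>s s' n \<omega>. 0 < s' \<Longrightarrow> s' \<le> s \<Longrightarrow> X s n \<omega> \<le> X s' n \<omega>"
    and bound: "\<And>s n. 0 < s \<Longrightarrow> n \<ge> 1 \<Longrightarrow> measure M (space M) - integral\<^sup>L M (X s n) \<le> G s"
    and G: "(G \<longlongrightarrow> 0) (at_right 0)"
  shows "measure M (\<Inter>\<epsilon>\<in>{0<..}. \<Union>c\<in>{0<..}. \<Union>s\<in>{0<..}. {\<omega>\<in>space M.
      ereal (1 - \<epsilon>) \<le> upper_density {n. \<omega> \<in> {\<omega>\<in>space M. n \<ge> 1 \<and> c < X s n \<omega>}}})
    = measure M (space M)"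
proof (rule measure_upper_density_ge_eq_space[OF assms(1)])
  show "{\<omega>\<in>space M. n \<ge> 1 \<and> c < X s n \<omega>} \<in> sets M" if "0 < s" for c s n
  proof (cases "n \<ge> 1")
    case True
    then show ?thesis
      using meas[OF that True] by measurable
  qed simp
  show "{\<omega>\<in>space M. n \<ge> 1 \<and> c < X s n \<omega>} \<subseteq> {\<omega>\<in>space M. n \<ge> 1 \<and> c' < X s' n \<omega>}"
    if "0 < c'" "c' \<le> c" "0 < s'" "s' \<le> s" for c s c' s' n
    using that(2) antimono[OF that(3,4)] by (auto intro: order.strict_trans1 order.strict_trans2)
  show "measure M (space M - {\<omega>\<in>space M. n \<ge> 1 \<and> t < X t n \<omega>}) \<le> G t / (1 - t)"
    if "0 < t" "t < 1" "n \<ge> 1" for t n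
  proof -
    have "integrable M (X t n)"
      using meas[OF that(1,3)] unit_interval by (intro finite_measure.integrable_const_bound[OF assms(1)]) auto
    then have "(1 - t) * measure M {\<omega>\<in>space M. X t n \<omega> \<le> t} \<le> measure M (space M) - integral\<^sup>L M (X t n)"
      by (rule reverse_Markov_inequality[OF assms(1)]) (use unit_interval in blast)
    also have "\<dots> \<le> G t"
      using bound that by simp
    finally have "(1 - t) * measure M {\<omega>\<in>space M. X t n \<omega> \<le> t} \<le> G t" .
    moreover have "space M - {\<omega>\<in>space M. n \<ge> 1 \<and> t < X t n \<omega>} = {\<omega>\<in>space M. X t n \<omega> \<le> t}"
      using that(3) by auto
    ultimately show ?thesis
      using that by (simp add: field_simps)
  qed
  show "((\<lambda>t. G t / (1 - t)) \<longlongrightarrow> 0) (at_right 0)"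
    using tendsto_divide[OF G tendsto_diff[OF tendsto_const tendsto_ident_at, of 1 0]] by simp
qed

definition sep_fraction :: "nat \<Rightarrow> (nat \<Rightarrow> 'b::metric_space) \<Rightarrow> real \<Rightarrow> real" where
  "sep_fraction R y r = real (Tsep (y ` {1..R}) r) / real R"

text \<open>No positivity of \<open>R\<close> is needed: for \<open>R = 0\<close> the fraction is \<open>0 / 0 = 0\<close>.\<close>

lemma sep_fraction_le_1: "sep_fraction R y r \<le> 1"
proof -
  have "Tsep (y ` {1..R}) r \<le> R"
    using Tsep_le_card[of "y ` {1..R}" r] card_image_le[of "{1..R}" y] by simp
  then show ?thesis
    unfolding sep_fraction_def by (cases "R = 0") auto
qed

lemma sep_fraction_antimono: "r' \<le> r \<Longrightarrow> sep_fraction R y r \<le> sep_fraction R y r'"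
  unfolding sep_fraction_def by (intro divide_right_mono of_nat_mono Tsep_antimono) auto

lemma borel_measurable_sep_fraction:
  fixes y :: "nat \<Rightarrow> 'a \<Rightarrow> 'b::{metric_space, second_countable_topology}"
  assumes "0 \<le> r" and "\<And>l. l \<in> {1..R} \<Longrightarrow> y l \<in> borel_measurable M"
  shows "(\<lambda>\<omega>. sep_fraction R (\<lambda>l. y l \<omega>) r) \<in> borel_measurable M"
proof -
  have "(\<lambda>\<omega>. Tsep ((\<lambda>l. y l \<omega>) ` {1..R}) r) \<in> M \<rightarrow>\<^sub>M count_space UNIV"
    using borel_measurable_Tsep[of "{1..R}" r y M] assms
    unfolding measurable_cong_sets[OF refl sets_borel_eq_count_space] by simp
  then show ?thesis
    unfolding sep_fraction_def by measurable
qed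

theorem mainTheorem11:
  fixes \<eta> :: "'a::metric_space measure"
    and f :: "nat \<Rightarrow> nat \<Rightarrow> 'a \<Rightarrow> real ^ 'd"
    and R :: "nat \<Rightarrow> nat"
    and G :: "real \<Rightarrow> real"
  assumes fin: "finite_measure \<eta>"
    and borel: "sets \<eta> = sets borel"
    and Rpos: "\<forall>n\<ge>1. R n > 0"
    and cont: "\<forall>n\<ge>1. \<forall>l\<in>{1..R n}. continuous_on UNIV (f l n)"
    and Gpos: "\<forall>s>0. G s > 0"
    and Glim: "(G \<longlongrightarrow> 0) (at_right 0)"
    and bound: "\<forall>n\<ge>1. \<forall>s>0.
        measure \<eta> (space \<eta>)
        - (\<integral>\<omega>. real (Tsep ((\<lambda>l. f l n \<omega>) ` {1..R n})
                  (s * real (R n) powr (- 1 / real CARD('d)))) / real (R n) \<partial>\<eta>)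
        \<le> G s"
  shows "let B = (\<lambda>c s n. {\<omega>. n \<ge> 1 \<and>
            real (Tsep ((\<lambda>l. f l n \<omega>) ` {1..R n})
                  (s * real (R n) powr (- 1 / real CARD('d)))) / real (R n) > c})
         in measure \<eta> (\<Inter>\<epsilon>\<in>{0<..}. \<Union>c\<in>{0<..}. \<Union>s\<in>{0<..}.
              {\<omega>. upper_density {n. \<omega> \<in> B c s n} \<ge> ereal (1 - \<epsilon>)})
            = measure \<eta> (space \<eta>)"
proof -
  have space: "space \<eta> = UNIV"
    using sets_eq_imp_space_eq[OF borel] by simp
  define X where "X s n \<omega> = sep_fraction (R n) (\<lambda>l. f l n \<omega>) (s * real (R n) powr (- 1 / real CARD('d)))"
    for s n \<omega>
  have "measure \<eta> (\<Inter>\<epsilon>\<in>{0<..}. \<Union>c\<in>{0<..}. \<Union>s\<in>{0<..}. {\<omega>\<in>space \<eta>.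
      ereal (1 - \<epsilon>) \<le> upper_density {n. \<omega> \<in> {\<omega>\<in>space \<eta>. n \<ge> 1 \<and> c < X s n \<omega>}}})
    = measure \<eta> (space \<eta>)"
  proof (rule measure_upper_density_level_sets_eq_space[OF fin _ _ _ _ Glim])
    show "X s n \<in> borel_measurable \<eta>" if "0 < s" "n \<ge> 1" for s n
      unfolding X_def measurable_cong_sets[OF borel refl] using cont that
      by (intro borel_measurable_sep_fraction borel_measurable_continuous_onI) auto
    show "0 \<le> X s n \<omega> \<and> X s n \<omega> \<le> 1" for s n \<omega>
      unfolding X_def by (intro conjI sep_fraction_le_1) (simp add: sep_fraction_def)
    show "X s n \<omega> \<le> X s' n \<omega>" if "0 < s'" "s' \<le> s" for s s' n \<omega>
      unfolding X_def using that by (intro sep_fraction_antimono mult_right_mono) auto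
    show "measure \<eta> (space \<eta>) - integral\<^sup>L \<eta> (X s n) \<le> G s" if "0 < s" "n \<ge> 1" for s n
      using bound that unfolding X_def sep_fraction_def by simp
  qed
  then show ?thesis
    unfolding Let_def X_def sep_fraction_def space by simp
qed

end
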